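(* Let $\Omega\subsetneq\mathbb{R}^n$ be open. For all $u\in C_c^\infty(\Omega)$, all $s>1$ and all $p\ge1$, $$\int_\Omega\frac{|\nabla u|^p}{d^{s-p}}dx\ \ge\ \Big(\frac{s-1}{p}\Big)^p\int_\Omega\frac{|u|^p}{d^s}dx+\Big(\frac{s-1}{p}\Big)^{p-1}\int_\Omega\frac{|u|^p}{d^{s-1}}(-\Delta d)\,dx,$$ where $-\Delta d$ is meant in the distributional sense.
   Context: $d(x):=\operatorname{dist}(x,\mathbb{R}^n\setminus\Omega)$. *)

theory Defs
  imports "HOL-Analysis.Analysis"
begin

definition dist_compl :: "'a::euclidean_space set \<Rightarrow> 'a \<Rightarrow> real" where
  "dist_compl \<Omega> x = infdist x (- \<Omega>)"

text \<open>Pointwise (classical) gradient where the function is differentiable, 0 elsewhere.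
  For locally Lipschitz functions this is the weak gradient (a.e.).\<close>
definition grad :: "('a::euclidean_space \<Rightarrow> real) \<Rightarrow> 'a \<Rightarrow> 'a" where
  "grad f x = (if f differentiable (at x)
               then (\<Sum>b\<in>Basis. frechet_derivative f (at x) b *\<^sub>R b) else 0)"

fun iter_pd :: "'a::euclidean_space list \<Rightarrow> ('a \<Rightarrow> real) \<Rightarrow> 'a \<Rightarrow> real" where
  "iter_pd [] f = f"
| "iter_pd (b # bs) f = (\<lambda>x. frechet_derivative (iter_pd bs f) (at x) b)"

definition smooth :: "('a::euclidean_space \<Rightarrow> real) \<Rightarrow> bool" where
  "smooth f \<longleftrightarrow> (\<forall>bs. set bs \<subseteq> Basis \<longrightarrow> iter_pd bs f differentiable_on UNIV)"

definition Cc_inf :: "'a::euclidean_space set \<Rightarrow> ('a \<Rightarrow> real) set" where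
  "Cc_inf \<Omega> = {u. smooth u \<and> compact (closure {x. u x \<noteq> 0}) \<and> closure {x. u x \<noteq> 0} \<subseteq> \<Omega>}"

text \<open>Pairing of the distribution -Laplace(w) on Omega with a (compactly supported, Lipschitz)
  test function phi:  <-Delta w, phi> = \<integral>_Omega grad w . grad phi dx
  (the definition of the distributional Laplacian, extended from C_c^infinity test
  functions by density).\<close>
definition neg_lap_pair :: "'a::euclidean_space set \<Rightarrow> ('a \<Rightarrow> real) \<Rightarrow> ('a \<Rightarrow> real) \<Rightarrow> real" where
  "neg_lap_pair \<Omega> w \<phi> = (\<integral>x\<in>\<Omega>. grad w x \<bullet> grad \<phi> x \<partial>lborel)"

end

theory Submission
  imports Defs
begin

text \<open>The pairing is the integral of \<open>grad d \<bullet> grad \<phi>\<close> with \<open>\<phi> = \<bar>u\<bar>^p / d^(s-1)\<close>, and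
  \<open>grad \<phi> = grad \<bar>u\<bar>^p / d^(s-1) - (s-1) \<bar>u\<bar>^p / d^s * grad d\<close>. Wherever \<open>d\<close> is
  differentiable in \<open>\<Omega>\<close> we have \<open>\<bar>grad d\<bar> = 1\<close>, and Young's inequality then shows that the
  integrand on the left dominates the combined integrand on the right. So it suffices that \<open>d\<close>
  is differentiable almost everywhere. This holds because \<open>\<bar>x\<bar>^2 - d(x)^2\<close> is convex: a convex
  function is differentiable wherever, in each coordinate direction, its forward and backward
  difference quotients come together, and the remaining points (kinks) are countable on every
  coordinate line, hence form a null set by Tonelli's theorem.\<close>

section \<open>Difference quotients\<close>

definition fwd_quot :: "('a::real_normed_vector \<Rightarrow> real) \<Rightarrow> 'a \<Rightarrow> 'a \<Rightarrow> nat \<Rightarrow> real" where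
  "fwd_quot g x b n = real (Suc n) * (g (x + (1 / real (Suc n)) *\<^sub>R b) - g x)"

definition bwd_quot :: "('a::real_normed_vector \<Rightarrow> real) \<Rightarrow> 'a \<Rightarrow> 'a \<Rightarrow> nat \<Rightarrow> real" where
  "bwd_quot g x b n = real (Suc n) * (g x - g (x - (1 / real (Suc n)) *\<^sub>R b))"

definition kink_set :: "('a::real_normed_vector \<Rightarrow> real) \<Rightarrow> 'a \<Rightarrow> 'a set" where
  "kink_set g b = (\<Union>m. \<Inter>n. {x. 1 / real (Suc m) \<le> fwd_quot g x b n - bwd_quot g x b n})"

lemma mem_kink_set_iff:
  "x \<in> kink_set g b \<longleftrightarrow> (\<exists>m. \<forall>n. 1 / real (Suc m) \<le> fwd_quot g x b n - bwd_quot g x b n)"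
  by (simp add: kink_set_def)

section \<open>Convex functions of one variable\<close>

lemma convex_on_slope_mono:
  fixes f :: "real \<Rightarrow> real"
  assumes f: "convex_on UNIV f" and "a < b" "a \<le> c" "b \<le> d" "c < d"
  shows "(f b - f a) / (b - a) \<le> (f d - f c) / (d - c)"
proof -
  have left: "(f b - f a) / (b - a) \<le> (f d - f a) / (d - a)" if "a < b" "b \<le> d" for a b d
  proof (cases "b = d")
    case False
    then have "(f a - f b) / (a - b) \<le> (f a - f d) / (a - d)"
      using convex_on_slope_le(1)[OF f, of a d b] that by simp
    then show ?thesis by (metis minus_diff_eq minus_divide_divide)
  qed simp
  have right: "(f d - f a) / (d - a) \<le> (f d - f c) / (d - c)" if "a \<le> c" "c < d" for a c d
  proof (cases "a = c")
    case False
    then have "(f a - f d) / (a - d) \<le> (f c - f d) / (c - d)"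
      using convex_on_slope_le(2)[OF f, of a d c] that by simp
    then show ?thesis by (metis minus_diff_eq minus_divide_divide)
  qed simp
  show ?thesis using left[of a b d] right[of a c d] assms by linarith
qed

(* Unsimplified denominators, so that convex_on_slope_mono applies literally. *)
lemma quot_real_eq_slope:
  fixes \<phi> :: "real \<Rightarrow> real" and n :: nat
  defines "h \<equiv> 1 / real (Suc n)"
  shows "fwd_quot \<phi> t 1 n = (\<phi> (t + h) - \<phi> t) / ((t + h) - t)"
    and "bwd_quot \<phi> t 1 n = (\<phi> t - \<phi> (t - h)) / (t - (t - h))"
  unfolding fwd_quot_def bwd_quot_def h_def by simp_all

lemma convex_on_quot_mono:
  fixes \<phi> :: "real \<Rightarrow> real"
  assumes cv: "convex_on UNIV \<phi>"
  shows "t \<le> s \<Longrightarrow> bwd_quot \<phi> t 1 n \<le> fwd_quot \<phi> s 1 k"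
    and "decseq (fwd_quot \<phi> t 1)"
    and "incseq (bwd_quot \<phi> t 1)"
    and "t + 2 / real (Suc n) \<le> s \<Longrightarrow> fwd_quot \<phi> t 1 n \<le> bwd_quot \<phi> s 1 n"
proof -
  have h: "0 < 1 / real (Suc n)" for n :: nat
    by simp
  have h_mono: "1 / real (Suc n) \<le> 1 / real (Suc m)" if "m \<le> n" for m n :: nat
    using that by (simp add: frac_le)
  show "t \<le> s \<Longrightarrow> bwd_quot \<phi> t 1 n \<le> fwd_quot \<phi> s 1 k"
    unfolding quot_real_eq_slope
    by (intro convex_on_slope_mono[OF cv]) (use h[of n] h[of k] in linarith)+
  show "decseq (fwd_quot \<phi> t 1)"
    unfolding decseq_def
  proof (intro allI impI)
    fix m n :: nat assume "m \<le> n"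
    then show "fwd_quot \<phi> t 1 n \<le> fwd_quot \<phi> t 1 m"
      unfolding quot_real_eq_slope using h[of n] h_mono[of m n]
      by (intro convex_on_slope_mono[OF cv]) auto
  qed
  show "incseq (bwd_quot \<phi> t 1)"
    unfolding incseq_def
  proof (intro allI impI)
    fix m n :: nat assume "m \<le> n"
    then show "bwd_quot \<phi> t 1 m \<le> bwd_quot \<phi> t 1 n"
      unfolding quot_real_eq_slope using h[of n] h_mono[of m n]
      by (intro convex_on_slope_mono[OF cv]) auto
  qed
  show "fwd_quot \<phi> t 1 n \<le> bwd_quot \<phi> s 1 n" if "t + 2 / real (Suc n) \<le> s"
  proof -
    have "2 / real (Suc n) = 2 * (1 / real (Suc n))" by simp
    then show ?thesis unfolding quot_real_eq_slope
      by (intro convex_on_slope_mono[OF cv]) (use that h[of n] in linarith)+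
  qed
qed

text \<open>At a kink the one-sided derivatives leave a gap, and the gaps at different points are
  disjoint intervals; choosing a rational in each gap injects the kinks into \<open>\<rat>\<close>.\<close>

lemma countable_kink_set_real:
  fixes \<phi> :: "real \<Rightarrow> real"
  assumes cv: "convex_on UNIV \<phi>"
  shows "countable (kink_set \<phi> 1)"
proof -
  define R where "R t = (INF n. fwd_quot \<phi> t 1 n)" for t
  define L where "L t = (SUP n. bwd_quot \<phi> t 1 n)" for t
  have R: "fwd_quot \<phi> t 1 \<longlonglongrightarrow> R t" for t
    unfolding R_def using convex_on_quot_mono[OF cv]
    by (intro LIMSEQ_decseq_INF bdd_belowI[of _ "bwd_quot \<phi> t 1 0"]) auto
  have L: "bwd_quot \<phi> t 1 \<longlonglongrightarrow> L t" for t
    unfolding L_def using convex_on_quot_mono[OF cv]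
    by (intro LIMSEQ_incseq_SUP bdd_aboveI[of _ "fwd_quot \<phi> t 1 0"]) auto
  have gap: "L t < R t" if kink: "t \<in> kink_set \<phi> 1" for t
  proof -
    obtain m where m: "\<And>n. 1 / real (Suc m) \<le> fwd_quot \<phi> t 1 n - bwd_quot \<phi> t 1 n"
      using kink by (auto simp: mem_kink_set_iff)
    have "1 / real (Suc m) \<le> R t - L t"
      using LIMSEQ_le_const[OF tendsto_diff[OF R L]] m by blast
    moreover have "0 < 1 / real (Suc m)" by simp
    ultimately show ?thesis by linarith
  qed
  have ordered: "R t \<le> L s" if lt: "t < s" for t s
  proof -
    obtain n where "1 / real (Suc n) < (s - t) / 2"
      using reals_Archimedean[of "(s - t) / 2"] lt by (auto simp: inverse_eq_divide)
    then have "t + 2 / real (Suc n) \<le> s" by (simp add: field_simps)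
    then have "fwd_quot \<phi> t 1 n \<le> bwd_quot \<phi> s 1 n" by (rule convex_on_quot_mono(4)[OF cv])
    moreover have "R t \<le> fwd_quot \<phi> t 1 n" by (rule decseq_ge[OF convex_on_quot_mono(2)[OF cv] R])
    moreover have "bwd_quot \<phi> s 1 n \<le> L s" by (rule incseq_le[OF convex_on_quot_mono(3)[OF cv] L])
    ultimately show ?thesis by linarith
  qed
  have "\<forall>t\<in>kink_set \<phi> 1. \<exists>q\<in>\<rat>. L t < q \<and> q < R t"
    using gap Rats_dense_in_real by blast
  then obtain r where r: "\<And>t. t \<in> kink_set \<phi> 1 \<Longrightarrow> r t \<in> \<rat> \<and> L t < r t \<and> r t < R t"
    by metis
  have "inj_on r (kink_set \<phi> 1)"
  proof (rule inj_onI, rule ccontr)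
    fix t s assume ts: "t \<in> kink_set \<phi> 1" "s \<in> kink_set \<phi> 1" "r t = r s" "t \<noteq> s"
    then consider "t < s" | "s < t" by linarith
    then show False
    proof cases
      case 1 then show False using ordered[OF 1] r[OF ts(1)] r[OF ts(2)] ts(3) by linarith
    next
      case 2 then show False using ordered[OF 2] r[OF ts(1)] r[OF ts(2)] ts(3) by linarith
    qed
  qed
  moreover have "countable (r ` kink_set \<phi> 1)"
    using r by (intro countable_subset[OF _ countable_rat]) auto
  ultimately show ?thesis by (rule countable_image_inj_on[rotated])
qed

lemma convex_on_slope_approx:
  fixes \<phi> :: "real \<Rightarrow> real"
  assumes cv: "convex_on UNIV \<phi>" and nk: "t \<notin> kink_set \<phi> 1"
  shows "\<exists>L. \<forall>e>0. \<exists>d>0. \<forall>r. \<bar>r\<bar> < d \<longrightarrow> \<bar>\<phi> (t + r) - \<phi> t - r * L\<bar> \<le> e * \<bar>r\<bar>"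
proof -
  define sp where "sp h = (\<phi> (t + h) - \<phi> t) / h" for h
  define sm where "sm h = (\<phi> t - \<phi> (t - h)) / h" for h
  define L where "L = Inf (sp ` {0<..})"
  have smsp: "sm a \<le> sp c" if "a > 0" "c > 0" for a c
    unfolding sm_def sp_def using convex_on_slope_mono[OF cv, of "t - a" t t "t + c"] that by simp
  have sp_mono: "sp r \<le> sp h" if "0 < r" "r \<le> h" for r h
    unfolding sp_def using convex_on_slope_mono[OF cv, of t "t + r" t "t + h"] that by simp
  have sm_mono: "sm h \<le> sm r" if "0 < r" "r \<le> h" for r h
    unfolding sm_def using convex_on_slope_mono[OF cv, of "t - h" t "t - r" t] that by simp
  have bdd: "bdd_below (sp ` {0<..})"
    using smsp[of 1] by (intro bdd_belowI[of _ "sm 1"]) auto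
  have L_le: "L \<le> sp r" if "r > 0" for r
    unfolding L_def using bdd that by (auto intro: cInf_lower)
  have L_ge: "sm r \<le> L" if "r > 0" for r
    unfolding L_def using smsp[OF that] by (intro cInf_greatest) auto
  have "\<exists>d>0. \<forall>r. \<bar>r\<bar> < d \<longrightarrow> \<bar>\<phi> (t + r) - \<phi> t - r * L\<bar> \<le> e * \<bar>r\<bar>" if e: "e > 0" for e
  proof -
    obtain m where "inverse (real (Suc m)) < e" using reals_Archimedean e by blast
    moreover obtain n where "fwd_quot \<phi> t 1 n - bwd_quot \<phi> t 1 n < 1 / real (Suc m)"
      using nk by (auto simp: mem_kink_set_iff not_le)
    moreover define d where "d = 1 / real (Suc n)"
    ultimately have gap: "sp d - sm d < e"
      unfolding quot_real_eq_slope sp_def sm_def by (simp add: inverse_eq_divide)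
    have d: "d > 0" unfolding d_def by simp
    have "\<bar>\<phi> (t + r) - \<phi> t - r * L\<bar> \<le> e * \<bar>r\<bar>" if r: "\<bar>r\<bar> < d" for r
    proof -
      consider "r = 0" | "r > 0" | "r < 0" by linarith
      then show ?thesis
      proof cases
        case 2
        have "sm d \<le> L" "L \<le> sp r" "sp r \<le> sp d" using L_ge[OF d] L_le[OF 2] sp_mono[OF 2] r 2 by auto
        moreover have "\<phi> (t + r) - \<phi> t - r * L = r * (sp r - L)" unfolding sp_def using 2 by (simp add: field_simps)
        ultimately show ?thesis using 2 gap by (simp add: mult_left_mono)
      next
        case 3
        define a where "a = - r"
        have a: "0 < a" "a \<le> d" using r 3 unfolding a_def by auto
        have "sm d \<le> sm a" "sm a \<le> L" "L \<le> sp d" using sm_mono[OF a] L_ge[OF a(1)] L_le[OF d] by auto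
        then have "0 \<le> a * (L - sm a)" "a * (L - sm a) \<le> a * e" using a gap by (auto intro!: mult_left_mono)
        moreover have "\<phi> (t + r) - \<phi> t - r * L = a * (L - sm a)"
          unfolding sm_def a_def using 3 by (simp add: field_simps)
        moreover have "e * \<bar>r\<bar> = a * e" using 3 unfolding a_def by simp
        ultimately show ?thesis by linarith
      qed simp
    qed
    then show ?thesis using d by blast
  qed
  then show ?thesis by blast
qed

lemma convex_on_differentiable_off_kinks_real:
  fixes \<phi> :: "real \<Rightarrow> real"
  assumes "convex_on UNIV \<phi>" and "t \<notin> kink_set \<phi> 1"
  shows "\<phi> differentiable (at t)"
proof -
  obtain L where L: "\<And>e. e > 0 \<Longrightarrow> \<exists>d>0. \<forall>r. \<bar>r\<bar> < d \<longrightarrow> \<bar>\<phi> (t + r) - \<phi> t - r * L\<bar> \<le> e * \<bar>r\<bar>"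
    using convex_on_slope_approx[OF assms] by blast
  have "(\<phi> has_derivative (\<lambda>h. h * L)) (at t)"
    unfolding has_derivative_at_alt
  proof (intro conjI allI impI bounded_linear_mult_left)
    fix e :: real assume "e > 0"
    then obtain d where "d > 0" "\<And>r. \<bar>r\<bar> < d \<Longrightarrow> \<bar>\<phi> (t + r) - \<phi> t - r * L\<bar> \<le> e * \<bar>r\<bar>"
      using L by blast
    then show "\<exists>d>0. \<forall>y. norm (y - t) < d \<longrightarrow> norm (\<phi> y - \<phi> t - (y - t) * L) \<le> e * norm (y - t)"
      by (metis add.commute diff_add_cancel real_norm_def)
  qed
  then show ?thesis by (auto simp: differentiable_def)
qed

section \<open>Convex functions of several variables\<close>

lemma convex_on_line:
  fixes g :: "'a::real_vector \<Rightarrow> real"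
  assumes "convex_on UNIV g"
  shows "convex_on UNIV (\<lambda>t::real. g (x + t *\<^sub>R b))"
proof (rule convex_onI)
  fix t s u :: real assume u: "0 < u" "u < 1"
  have "x + ((1 - u) * t + u * s) *\<^sub>R b = (1 - u) *\<^sub>R (x + t *\<^sub>R b) + u *\<^sub>R (x + s *\<^sub>R b)"
    by (simp add: algebra_simps)
  then show "g (x + ((1 - u) *\<^sub>R t + u *\<^sub>R s) *\<^sub>R b) \<le> (1 - u) * g (x + t *\<^sub>R b) + u * g (x + s *\<^sub>R b)"
    using convex_onD[OF assms, of u "x + t *\<^sub>R b" "x + s *\<^sub>R b"] u by simp
qed simp

lemma kink_set_line:
  "x + t *\<^sub>R b \<in> kink_set g b \<longleftrightarrow> t \<in> kink_set (\<lambda>t. g (x + t *\<^sub>R b)) 1"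
proof -
  have "fwd_quot g (x + t *\<^sub>R b) b n = fwd_quot (\<lambda>t. g (x + t *\<^sub>R b)) t 1 n"
    and "bwd_quot g (x + t *\<^sub>R b) b n = bwd_quot (\<lambda>t. g (x + t *\<^sub>R b)) t 1 n" for n
    by (simp_all add: fwd_quot_def bwd_quot_def algebra_simps)
  then show ?thesis by (simp add: mem_kink_set_iff)
qed

lemma null_sets_lborel_if_lines_null:
  fixes B :: "'a::euclidean_space set" and b :: 'a
  assumes B: "B \<in> sets borel" and b: "b \<in> Basis"
    and lines: "\<And>x. {t::real. x + t *\<^sub>R b \<in> B} \<in> null_sets lborel"
  shows "B \<in> null_sets lborel"
proof -
  interpret P: product_sigma_finite "\<lambda>_::'a. lborel::real measure"
    by standard
  let ?T = "\<lambda>f::'a \<Rightarrow> real. \<Sum>c\<in>Basis. f c *\<^sub>R c"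
  have Tm: "?T \<in> measurable (\<Pi>\<^sub>M c\<in>Basis. (lborel::real measure)) borel"
    by measurable
  have Bm[measurable]: "B \<in> sets borel" by (rule B)
  have "emeasure lborel B = (\<integral>\<^sup>+x. indicator B x \<partial>lborel)"
    by simp
  also have "\<dots> = (\<integral>\<^sup>+x. indicator B x \<partial>(distr (\<Pi>\<^sub>M c\<in>Basis. (lborel::real measure)) borel ?T))"
    by (subst lborel_eq) simp
  also have "\<dots> = (\<integral>\<^sup>+f. indicator B (?T f) \<partial>(\<Pi>\<^sub>M c\<in>Basis. (lborel::real measure)))"
    by (rule nn_integral_distr[OF Tm]) simp
  also have "\<dots> = (\<integral>\<^sup>+f. indicator B (?T f) \<partial>(\<Pi>\<^sub>M c\<in>insert b (Basis - {b}). (lborel::real measure)))"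
    using b by (simp add: insert_absorb)
  also have "\<dots> = (\<integral>\<^sup>+x. (\<integral>\<^sup>+y. indicator B (?T (x(b := y))) \<partial>lborel) \<partial>(\<Pi>\<^sub>M c\<in>Basis - {b}. (lborel::real measure)))"
  proof (rule P.product_nn_integral_insert)
    show "(\<lambda>f. indicator B (?T f)) \<in> borel_measurable (\<Pi>\<^sub>M c\<in>insert b (Basis - {b}). (lborel::real measure))"
      using Tm b by (simp add: insert_absorb)
  qed auto
  also have "\<dots> = (\<integral>\<^sup>+x. 0 \<partial>(\<Pi>\<^sub>M c\<in>Basis - {b}. (lborel::real measure)))"
  proof (rule nn_integral_cong)
    fix x :: "'a \<Rightarrow> real"
    define x0 where "x0 = (\<Sum>c\<in>Basis - {b}. x c *\<^sub>R c)"
    have eq: "?T (x(b := y)) = x0 + y *\<^sub>R b" for y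
      unfolding x0_def using b by (auto simp: sum.remove[of Basis b] intro!: sum.cong)
    have "(\<integral>\<^sup>+y. indicator B (?T (x(b := y))) \<partial>lborel) = (\<integral>\<^sup>+y. indicator {t. x0 + t *\<^sub>R b \<in> B} y \<partial>lborel)"
      by (rule nn_integral_cong) (simp only: eq indicator_def mem_Collect_eq)
    also have "\<dots> = emeasure lborel {t. x0 + t *\<^sub>R b \<in> B}"
      using lines[of x0] by (simp add: null_sets_def)
    also have "\<dots> = 0" using lines[of x0] by auto
    finally show "(\<integral>\<^sup>+y. indicator B (?T (x(b := y))) \<partial>lborel) = 0" .
  qed
  also have "\<dots> = 0" by simp
  finally show ?thesis using B by (simp add: null_sets_def)
qed

lemma kink_set_borel:
  fixes g :: "'a::euclidean_space \<Rightarrow> real"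
  assumes "continuous_on UNIV g"
  shows "kink_set g b \<in> sets borel"
proof -
  have "closed {x. 1 / real (Suc m) \<le> fwd_quot g x b n - bwd_quot g x b n}" for m n
    unfolding fwd_quot_def bwd_quot_def
    by (intro closed_Collect_le continuous_intros continuous_on_compose2[OF assms]) auto
  then show ?thesis unfolding kink_set_def by (intro sets.countable_UN sets.countable_INT') auto
qed

lemma convex_kink_set_null:
  fixes g :: "'a::euclidean_space \<Rightarrow> real"
  assumes cv: "convex_on UNIV g" and b: "b \<in> Basis"
  shows "kink_set g b \<in> null_sets lborel"
proof (rule null_sets_lborel_if_lines_null[OF kink_set_borel b])
  show "continuous_on UNIV g" using convex_on_continuous[OF open_UNIV cv] .
  fix x :: 'a
  have "countable (kink_set (\<lambda>t. g (x + t *\<^sub>R b)) 1)"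
    by (rule countable_kink_set_real[OF convex_on_line[OF cv]])
  then show "{t. x + t *\<^sub>R b \<in> kink_set g b} \<in> null_sets lborel"
    by (simp add: kink_set_line countable_imp_null_set_lborel)
qed

lemma has_derivative_quot_limits:
  fixes f :: "'a::real_normed_vector \<Rightarrow> real"
  assumes D: "(f has_derivative D) (at x)"
  shows "fwd_quot f x b \<longlonglongrightarrow> D b" and "bwd_quot f x b \<longlonglongrightarrow> D b"
proof -
  define \<psi> where "\<psi> t = f (x + t *\<^sub>R b)" for t :: real
  have "((\<lambda>t. x + t *\<^sub>R b) has_derivative (\<lambda>t. t *\<^sub>R b)) (at 0)"
    by (auto intro!: derivative_eq_intros)
  then have "(\<psi> has_derivative (\<lambda>t. D (t *\<^sub>R b))) (at 0)"
    unfolding \<psi>_def using has_derivative_compose[of "\<lambda>t. x + t *\<^sub>R b" _ 0 UNIV f D] D by simp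
  moreover have "(\<lambda>t. D (t *\<^sub>R b)) = (\<lambda>t. D b * t)"
    using has_derivative_bounded_linear[OF D]
    by (auto simp: bounded_linear.linear linear_cmul mult.commute)
  ultimately have "(\<psi> has_field_derivative D b) (at 0)"
    by (simp add: has_field_derivative_def)
  then have lim: "((\<lambda>y. (\<psi> y - \<psi> 0) / (y - 0)) \<longlongrightarrow> D b) (at 0)"
    by (simp add: has_field_derivative_iff)
  have to_0: "filterlim (\<lambda>n. 1 / real (Suc n)) (at 0) sequentially"
    and to_0': "filterlim (\<lambda>n. - (1 / real (Suc n))) (at 0) sequentially"
    using LIMSEQ_inverse_real_of_nat tendsto_minus[OF LIMSEQ_inverse_real_of_nat]
    by (auto simp: filterlim_at inverse_eq_divide)
  show "fwd_quot f x b \<longlonglongrightarrow> D b"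
    using filterlim_compose[OF lim to_0] unfolding \<psi>_def fwd_quot_def by (simp add: mult.commute)
  have "(\<psi> (- (1 / real (Suc n))) - \<psi> 0) / (- (1 / real (Suc n)) - 0) = bwd_quot f x b n" for n
    unfolding \<psi>_def bwd_quot_def by (simp add: field_simps)
  then show "bwd_quot f x b \<longlonglongrightarrow> D b"
    using filterlim_compose[OF lim to_0'] by simp
qed

lemma differentiable_not_in_kink_set:
  fixes f :: "'a::real_normed_vector \<Rightarrow> real"
  assumes "f differentiable (at x)"
  shows "x \<notin> kink_set f b"
proof
  obtain D where D: "(f has_derivative D) (at x)" using assms by (auto simp: differentiable_def)
  have "(\<lambda>n. fwd_quot f x b n - bwd_quot f x b n) \<longlonglongrightarrow> 0"
    using tendsto_diff[OF has_derivative_quot_limits[OF D, of b]] by simp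
  moreover assume "x \<in> kink_set f b"
  then obtain m where "\<And>n. 1 / real (Suc m) \<le> fwd_quot f x b n - bwd_quot f x b n"
    by (auto simp: mem_kink_set_iff)
  ultimately have "1 / real (Suc m) \<le> 0"
    using LIMSEQ_le_const by blast
  then show False by simp
qed

lemma convex_on_shift_minus_linear:
  fixes g :: "'a::real_vector \<Rightarrow> real"
  assumes cv: "convex_on UNIV g" and lin: "linear D"
  shows "convex_on UNIV (\<lambda>v. g (x + v) - g x - D v)"
proof (rule convex_onI)
  fix v w :: 'a and t :: real assume t: "0 < t" "t < 1"
  have "x + ((1 - t) *\<^sub>R v + t *\<^sub>R w) = (1 - t) *\<^sub>R (x + v) + t *\<^sub>R (x + w)"
    by (simp add: algebra_simps)
  then have "g (x + ((1 - t) *\<^sub>R v + t *\<^sub>R w)) \<le> (1 - t) * g (x + v) + t * g (x + w)"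
    using convex_onD[OF cv, of t "x + v" "x + w"] t by simp
  moreover have "D ((1 - t) *\<^sub>R v + t *\<^sub>R w) = (1 - t) * D v + t * D w"
    using lin by (simp add: linear_add linear_scale)
  ultimately show "g (x + ((1 - t) *\<^sub>R v + t *\<^sub>R w)) - g x - D ((1 - t) *\<^sub>R v + t *\<^sub>R w)
      \<le> (1 - t) * (g (x + v) - g x - D v) + t * (g (x + w) - g x - D w)"
    by (simp add: algebra_simps)
qed simp

text \<open>\<open>v\<close> is the average of the points \<open>DIM('a) (v \<bullet> b) b\<close>, so convexity bounds \<open>\<psi> v\<close> from
  above; \<open>\<psi> v \<ge> - \<psi> (- v)\<close> bounds it from below.\<close>

lemma convex_on_bound_from_Basis:
  fixes \<psi> :: "'a::euclidean_space \<Rightarrow> real"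
  assumes cv: "convex_on UNIV \<psi>" and "\<psi> 0 = 0" and "e \<ge> 0"
    and small: "\<And>b t. b \<in> Basis \<Longrightarrow> \<bar>t\<bar> < \<delta> \<Longrightarrow> \<bar>\<psi> (t *\<^sub>R b)\<bar> \<le> e * \<bar>t\<bar>"
    and v: "real DIM('a) * norm v < \<delta>"
  shows "\<bar>\<psi> v\<bar> \<le> e * DIM('a) * norm v"
proof -
  define N where "N = real DIM('a)"
  have N: "N \<ge> 1" unfolding N_def using DIM_positive[where 'a='a] by linarith
  have upper: "\<psi> w \<le> e * N * norm w" if w: "N * norm w < \<delta>" for w
  proof -
    have coord: "\<bar>N * (w \<bullet> b)\<bar> < \<delta>" if "b \<in> Basis" for b
      using Basis_le_norm[OF that, of w] N w by (simp add: abs_mult) (smt (verit) mult_left_mono)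
    have "w = (\<Sum>b\<in>Basis. (1 / N) *\<^sub>R ((N * (w \<bullet> b)) *\<^sub>R b))"
      using N by (simp add: euclidean_representation)
    then have "\<psi> w = \<psi> (\<Sum>b\<in>Basis. (1 / N) *\<^sub>R ((N * (w \<bullet> b)) *\<^sub>R b))" by simp
    also have "\<dots> \<le> (\<Sum>b\<in>Basis. (1 / N) * \<psi> ((N * (w \<bullet> b)) *\<^sub>R b))"
      by (rule convex_on_sum[OF _ _ cv]) (use N in \<open>auto simp: N_def\<close>)
    also have "\<dots> \<le> (\<Sum>b\<in>Basis. (1 / N) * (e * \<bar>N * (w \<bullet> b)\<bar>))"
    proof (rule sum_mono)
      fix b :: 'a assume b: "b \<in> Basis"
      have "\<psi> ((N * (w \<bullet> b)) *\<^sub>R b) \<le> e * \<bar>N * (w \<bullet> b)\<bar>"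
        using small[OF b coord[OF b]] by linarith
      then show "(1 / N) * \<psi> ((N * (w \<bullet> b)) *\<^sub>R b) \<le> (1 / N) * (e * \<bar>N * (w \<bullet> b)\<bar>)"
        using N by (intro mult_left_mono) auto
    qed
    also have "\<dots> = (\<Sum>b\<in>Basis. e * \<bar>w \<bullet> b\<bar>)"
      using N by (intro sum.cong) (auto simp: abs_mult)
    also have "\<dots> \<le> (\<Sum>b\<in>(Basis::'a set). e * norm w)"
      using \<open>e \<ge> 0\<close> by (intro sum_mono mult_left_mono) (auto simp: Basis_le_norm)
    also have "\<dots> = e * N * norm w" by (simp add: N_def)
    finally show ?thesis .
  qed
  have "\<psi> 0 \<le> (1 - 1/2) * \<psi> (- v) + (1/2) * \<psi> v"
    using convex_onD[OF cv, of "1/2" "- v" v] by simp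
  then have "- \<psi> (- v) \<le> \<psi> v" using \<open>\<psi> 0 = 0\<close> by simp
  then show ?thesis using upper[of v] upper[of "- v"] v unfolding N_def by auto
qed

lemma convex_has_derivative_from_Basis:
  fixes g :: "'a::euclidean_space \<Rightarrow> real"
  assumes cv: "convex_on UNIV g" and lin: "bounded_linear D"
    and partial: "\<And>b. b \<in> Basis \<Longrightarrow> ((\<lambda>t. g (x + t *\<^sub>R b)) has_real_derivative D b) (at 0)"
  shows "(g has_derivative D) (at x)"
proof -
  define \<psi> where "\<psi> v = g (x + v) - g x - D v" for v
  have cv\<psi>: "convex_on UNIV \<psi>"
    unfolding \<psi>_def by (rule convex_on_shift_minus_linear[OF cv bounded_linear.linear[OF lin]])
  have \<psi>0: "\<psi> 0 = 0" unfolding \<psi>_def using bounded_linear.linear[OF lin] by (simp add: linear_0)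
  define N where "N = real DIM('a)"
  have N: "N \<ge> 1" unfolding N_def using DIM_positive[where 'a='a] by linarith
  show ?thesis
    unfolding has_derivative_at_alt
  proof (intro conjI lin allI impI)
    fix e :: real assume e: "e > 0"
    have "\<exists>\<delta>>0. \<forall>t. \<bar>t\<bar> < \<delta> \<longrightarrow> \<bar>\<psi> (t *\<^sub>R b)\<bar> \<le> e / N * \<bar>t\<bar>" if b: "b \<in> Basis" for b
    proof -
      have "e / N > 0" using e N by simp
      then obtain \<delta> where "\<delta> > 0"
        "\<And>t. norm (t - 0) < \<delta> \<Longrightarrow> norm (g (x + t *\<^sub>R b) - g (x + 0 *\<^sub>R b) - D b * (t - 0)) \<le> e / N * norm (t - 0)"
        using partial[OF b] unfolding has_field_derivative_def has_derivative_at_alt by blast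
      then show ?thesis
        unfolding \<psi>_def using linear_scale[OF bounded_linear.linear[OF lin]] by (auto simp: mult.commute)
    qed
    then obtain \<delta> where \<delta>: "\<And>b. b \<in> Basis \<Longrightarrow> \<delta> b > 0 \<and>
        (\<forall>t. \<bar>t\<bar> < \<delta> b \<longrightarrow> \<bar>\<psi> (t *\<^sub>R b)\<bar> \<le> e / N * \<bar>t\<bar>)"
      by metis
    have \<delta>_min: "Min (\<delta> ` Basis) > 0" using \<delta> by (simp add: Min_gr_iff)
    have "norm (g y - g x - D (y - x)) \<le> e * norm (y - x)"
      if y: "norm (y - x) < Min (\<delta> ` Basis) / N" for y
    proof -
      have "\<bar>\<psi> (y - x)\<bar> \<le> e / N * DIM('a) * norm (y - x)"
      proof (rule convex_on_bound_from_Basis[OF cv\<psi> \<psi>0])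
        show "\<bar>\<psi> (t *\<^sub>R b)\<bar> \<le> e / N * \<bar>t\<bar>" if "b \<in> Basis" "\<bar>t\<bar> < Min (\<delta> ` Basis)" for b t
          using \<delta>[OF that(1)] that by auto
        show "real DIM('a) * norm (y - x) < Min (\<delta> ` Basis)"
          using y N unfolding N_def by (simp add: field_simps)
      qed (use e N in auto)
      then show ?thesis unfolding \<psi>_def N_def using N by simp
    qed
    then show "\<exists>d>0. \<forall>y. norm (y - x) < d \<longrightarrow> norm (g y - g x - D (y - x)) \<le> e * norm (y - x)"
      using \<delta>_min N by (intro exI[of _ "Min (\<delta> ` Basis) / N"]) auto
  qed
qed

lemma convex_differentiable_off_kink_sets:
  fixes g :: "'a::euclidean_space \<Rightarrow> real"
  assumes cv: "convex_on UNIV g" and nk: "\<And>b. b \<in> Basis \<Longrightarrow> x \<notin> kink_set g b"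
  shows "g differentiable (at x)"
proof -
  have "\<exists>l. ((\<lambda>t. g (x + t *\<^sub>R b)) has_real_derivative l) (at 0)" if b: "b \<in> Basis" for b
  proof -
    have "0 \<notin> kink_set (\<lambda>t. g (x + t *\<^sub>R b)) 1"
      using nk[OF b] kink_set_line[of x 0 b g] by simp
    then show ?thesis
      using convex_on_differentiable_off_kinks_real[OF convex_on_line[OF cv]]
      by (auto simp flip: DERIV_deriv_iff_real_differentiable)
  qed
  then obtain l where l: "\<And>b. b \<in> Basis \<Longrightarrow> ((\<lambda>t. g (x + t *\<^sub>R b)) has_real_derivative l b) (at 0)"
    by metis
  define D where "D v = (\<Sum>b\<in>Basis. (v \<bullet> b) * l b)" for v
  have "bounded_linear D" unfolding D_def
    by (intro bounded_linear_sum bounded_linear_compose[OF bounded_linear_mult_left bounded_linear_inner_left])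
  moreover have "D b = l b" if "b \<in> Basis" for b
  proof -
    have "D b = (\<Sum>c\<in>Basis. if c = b then l c else 0)"
      unfolding D_def using that by (intro sum.cong) (auto simp: inner_Basis)
    then show ?thesis using that by simp
  qed
  ultimately have "(g has_derivative D) (at x)"
    using l by (intro convex_has_derivative_from_Basis[OF cv]) auto
  then show ?thesis by (auto simp: differentiable_def)
qed

lemma convex_nondifferentiable_null:
  fixes g :: "'a::euclidean_space \<Rightarrow> real"
  assumes "convex_on UNIV g"
  shows "{x. \<not> g differentiable (at x)} \<in> null_sets lborel"
proof -
  have "{x. \<not> g differentiable (at x)} = (\<Union>b\<in>Basis. kink_set g b)"
    using convex_differentiable_off_kink_sets[OF assms] differentiable_not_in_kink_set by blast
  moreover have "(\<Union>b\<in>Basis. kink_set g b) \<in> null_sets lborel"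
    using convex_kink_set_null[OF assms] by (intro null_sets_UN') (auto intro: countable_finite)
  ultimately show ?thesis by simp
qed

lemma grad_eq_sum:
  assumes "(f has_derivative D) (at x)"
  shows "grad f x = (\<Sum>b\<in>Basis. D b *\<^sub>R b)"
  using assms frechet_derivative_at[OF assms] unfolding grad_def
  by (auto simp: differentiable_def)

lemma grad_inner:
  assumes D: "(f has_derivative D) (at x)"
  shows "grad f x \<bullet> v = D v"
proof -
  have "grad f x \<bullet> v = (\<Sum>b\<in>Basis. (v \<bullet> b) * D b)"
    unfolding grad_eq_sum[OF D] inner_sum_left inner_scaleR_left
    by (intro sum.cong) (auto simp: inner_commute)
  also have "\<dots> = D (\<Sum>b\<in>Basis. (v \<bullet> b) *\<^sub>R b)"
    using has_derivative_linear[OF D] by (simp add: linear_sum linear_scale)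
  finally show ?thesis by (simp add: euclidean_representation)
qed

lemma norm_grad_le_lipschitz:
  fixes f :: "'a::euclidean_space \<Rightarrow> real"
  assumes lip: "C-lipschitz_on UNIV f"
  shows "norm (grad f x) \<le> C"
proof (cases "f differentiable (at x)")
  case True
  then obtain D where D: "(f has_derivative D) (at x)" by (auto simp: differentiable_def)
  have D_le: "D v \<le> C * norm v" for v
  proof -
    have "fwd_quot f x v n \<le> C * norm v" for n
    proof -
      have "\<bar>f (x + (1 / real (Suc n)) *\<^sub>R v) - f x\<bar> \<le> C * (norm v / real (Suc n))"
        using lipschitz_onD[OF lip, of "x + (1 / real (Suc n)) *\<^sub>R v" x] by (simp add: dist_norm dist_real_def)
      then show ?thesis unfolding fwd_quot_def by (simp add: field_simps abs_le_iff)
    qed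
    then show ?thesis using LIMSEQ_le_const2[OF has_derivative_quot_limits(1)[OF D]] by blast
  qed
  have "norm (grad f x) * norm (grad f x) \<le> C * norm (grad f x)"
    using D_le[of "grad f x"] grad_inner[OF D, of "grad f x"] by (simp add: dot_square_norm power2_eq_square)
  then show ?thesis by (cases "grad f x = 0") (use lipschitz_on_nonneg[OF lip] in auto)
qed (use lipschitz_on_nonneg[OF lip] in \<open>simp add: grad_def\<close>)

lemma borel_measurable_indicator_grad:
  fixes f :: "'a::euclidean_space \<Rightarrow> real"
  assumes cont: "continuous_on UNIV f" and A: "A \<in> sets borel"
    and diff: "\<And>x. x \<in> A \<Longrightarrow> f differentiable (at x)"
  shows "(\<lambda>x. indicator A x *\<^sub>R grad f x) \<in> borel_measurable borel"
proof -
  have "(\<lambda>x. indicator A x *\<^sub>R grad f x) = (\<lambda>x. indicator A x *\<^sub>R (\<Sum>b\<in>Basis. lim (fwd_quot f x b) *\<^sub>R b))"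
  proof
    fix x
    show "indicator A x *\<^sub>R grad f x = indicator A x *\<^sub>R (\<Sum>b\<in>Basis. lim (fwd_quot f x b) *\<^sub>R b)"
    proof (cases "x \<in> A")
      case True
      then obtain D where D: "(f has_derivative D) (at x)" using diff by (auto simp: differentiable_def)
      then have "lim (fwd_quot f x b) = D b" for b by (rule limI[OF has_derivative_quot_limits(1)])
      then show ?thesis using grad_eq_sum[OF D] by simp
    qed simp
  qed
  moreover have "(\<lambda>x. fwd_quot f x b n) \<in> borel_measurable borel" for b n
    unfolding fwd_quot_def
    by (intro borel_measurable_continuous_onI continuous_intros continuous_on_compose2[OF cont]) auto
  moreover note A[measurable]
  ultimately show ?thesis
    by (simp only:) (intro borel_measurable_scaleR borel_measurable_indicator borel_measurable_sum
        borel_measurable_lim_metric, auto)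
qed

section \<open>The distance to a closed set\<close>

text \<open>Twice the Asplund function of \<open>S\<close>: it is the supremum of the affine functions
  \<open>2 x \<bullet> y - y \<bullet> y\<close>, \<open>y \<in> S\<close>, attained at a nearest point, hence convex.\<close>

definition asplund :: "'a::euclidean_space set \<Rightarrow> 'a \<Rightarrow> real" where
  "asplund S x = x \<bullet> x - (infdist x S)\<^sup>2"

lemma asplund_ge:
  assumes "y \<in> S"
  shows "2 * (x \<bullet> y) - y \<bullet> y \<le> asplund S x"
proof -
  have "(infdist x S)\<^sup>2 \<le> (dist x y)\<^sup>2"
    using infdist_le[OF assms, of x] infdist_nonneg by (intro power_mono) auto
  also have "(dist x y)\<^sup>2 = (x - y) \<bullet> (x - y)" by (simp add: dist_norm power2_norm_eq_inner)
  finally show ?thesis unfolding asplund_def by (simp add: inner_diff inner_commute)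
qed

lemma asplund_nearest:
  assumes "infdist x S = dist x y"
  shows "asplund S x = 2 * (x \<bullet> y) - y \<bullet> y"
proof -
  have "(infdist x S)\<^sup>2 = (x - y) \<bullet> (x - y)" using assms by (simp add: dist_norm power2_norm_eq_inner)
  then show ?thesis unfolding asplund_def by (simp add: inner_diff inner_commute)
qed

lemma lipschitz_infdist: "1-lipschitz_on UNIV (\<lambda>x. infdist x S)"
  by (intro lipschitz_onI) (simp_all add: dist_real_def infdist_triangle_abs)

context
  fixes S :: "'a::euclidean_space set"
  assumes S: "closed S" "S \<noteq> {}"
begin

lemma convex_on_asplund: "convex_on UNIV (asplund S)"
proof (rule convex_onI)
  fix t :: real and a c :: 'a assume t: "0 < t" "t < 1"
  define w where "w = (1 - t) *\<^sub>R a + t *\<^sub>R c"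
  obtain y where y: "y \<in> S" "infdist w S = dist w y"
    using infdist_attains_inf[OF S] by metis
  have "asplund S w = 2 * (w \<bullet> y) - y \<bullet> y" by (rule asplund_nearest[OF y(2)])
  also have "\<dots> = (1 - t) * (2 * (a \<bullet> y) - y \<bullet> y) + t * (2 * (c \<bullet> y) - y \<bullet> y)"
    unfolding w_def by (simp add: inner_add_left algebra_simps)
  also have "\<dots> \<le> (1 - t) * asplund S a + t * asplund S c"
    using asplund_ge[OF y(1)] t by (intro add_mono mult_left_mono) auto
  finally show "asplund S ((1 - t) *\<^sub>R a + t *\<^sub>R c) \<le> (1 - t) * asplund S a + t * asplund S c"
    unfolding w_def .
qed simp

lemma infdist_differentiable_iff_asplund:
  assumes x: "x \<notin> S"
  shows "(\<lambda>y. infdist y S) differentiable (at x) \<longleftrightarrow> asplund S differentiable (at x)"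
proof
  assume "(\<lambda>y. infdist y S) differentiable (at x)"
  then show "asplund S differentiable (at x)"
    unfolding asplund_def[abs_def] by (intro derivative_intros) auto
next
  assume "asplund S differentiable (at x)"
  then have "(\<lambda>z. z \<bullet> z - asplund S z) differentiable (at x)"
    by (intro derivative_intros) auto
  then obtain D where D: "((\<lambda>z. z \<bullet> z - asplund S z) has_derivative D) (at x)"
    by (auto simp: differentiable_def)
  have "(\<lambda>y. infdist y S) = (\<lambda>z. sqrt (z \<bullet> z - asplund S z))"
    by (simp add: asplund_def fun_eq_iff infdist_nonneg abs_of_nonneg)
  moreover have "x \<bullet> x - asplund S x > 0"
    using infdist_pos_not_in_closed[OF S x] by (simp add: asplund_def)
  ultimately show "(\<lambda>y. infdist y S) differentiable (at x)"
    using has_derivative_real_sqrt[OF _ D] by (auto simp: differentiable_def)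
qed

lemma infdist_nondifferentiable_null:
  "{x. x \<notin> S \<and> \<not> (\<lambda>y. infdist y S) differentiable (at x)} \<in> null_sets lborel"
proof -
  have "{x. x \<notin> S \<and> \<not> (\<lambda>y. infdist y S) differentiable (at x)}
      = {x. \<not> asplund S differentiable (at x)} \<inter> - S"
    using infdist_differentiable_iff_asplund by blast
  then show ?thesis
    using S(1) by (auto intro!: null_set_Int2 convex_nondifferentiable_null[OF convex_on_asplund])
qed

lemma borel_measurable_grad_infdist:
  "(\<lambda>x. indicator (- S) x *\<^sub>R grad (\<lambda>y. infdist y S) x) \<in> borel_measurable borel"
proof -
  define A where "A = - S - {x. x \<notin> S \<and> \<not> (\<lambda>y. infdist y S) differentiable (at x)}"
  have "A \<in> sets borel"
    unfolding A_def using S(1) null_setsD2[OF infdist_nondifferentiable_null] by auto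
  then have "(\<lambda>x. indicator A x *\<^sub>R grad (\<lambda>y. infdist y S) x) \<in> borel_measurable borel"
    by (rule borel_measurable_indicator_grad[rotated]) (auto simp: A_def intro: continuous_intros)
  moreover have "indicator A x *\<^sub>R grad (\<lambda>y. infdist y S) x = indicator (- S) x *\<^sub>R grad (\<lambda>y. infdist y S) x" for x
    by (cases "x \<in> A") (auto simp: A_def grad_def indicator_def)
  ultimately show ?thesis by simp
qed

lemma norm_grad_infdist:
  assumes x: "x \<notin> S" and diff: "(\<lambda>y. infdist y S) differentiable (at x)"
  shows "norm (grad (\<lambda>y. infdist y S) x) = 1"
proof -
  let ?d = "\<lambda>y. infdist y S"
  obtain D where D: "(?d has_derivative D) (at x)" using diff by (auto simp: differentiable_def)
  obtain y where y: "y \<in> S" "?d x = dist x y"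
    using infdist_attains_inf[OF S] by metis
  define v where "v = y - x"
  have v: "norm v = ?d x" unfolding v_def using y by (simp add: dist_norm norm_minus_commute)
  \<comment> \<open>moving towards a nearest point of \<open>S\<close>, the distance decreases at unit rate\<close>
  have "fwd_quot ?d x v n \<le> - norm v" for n
  proof -
    define h where "h = 1 / real (Suc n)"
    have h: "0 < h" "h \<le> 1" unfolding h_def by (auto simp: field_simps)
    have "x + h *\<^sub>R v - y = (1 - h) *\<^sub>R (x - y)" unfolding v_def by (simp add: algebra_simps)
    then have "?d (x + h *\<^sub>R v) \<le> (1 - h) * norm v"
      using infdist_le[OF y(1), of "x + h *\<^sub>R v"] h
      by (simp add: dist_norm v_def norm_minus_commute)
    then show ?thesis
      unfolding fwd_quot_def h_def[symmetric] using v by (simp add: h_def field_simps)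
  qed
  then have "D v \<le> - norm v"
    using LIMSEQ_le_const2[OF has_derivative_quot_limits(1)[OF D]] by blast
  then have "grad ?d x \<bullet> v \<le> - norm v" using grad_inner[OF D] by simp
  moreover have "- (norm (grad ?d x) * norm v) \<le> grad ?d x \<bullet> v"
    using Cauchy_Schwarz_ineq2[of "grad ?d x" v] by (simp add: abs_le_iff)
  moreover have "norm v > 0" using v infdist_pos_not_in_closed[OF S x] by simp
  ultimately have "1 \<le> norm (grad ?d x)" by (smt (verit) mult_le_cancel_right1)
  moreover have "norm (grad ?d x) \<le> 1" by (rule norm_grad_le_lipschitz[OF lipschitz_infdist])
  ultimately show ?thesis by simp
qed

end

lemma smooth_differentiable:
  assumes "smooth u"
  shows "u differentiable (at x)"
proof -
  have "iter_pd [] u differentiable_on UNIV"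
    using assms unfolding smooth_def by (metis empty_subsetI list.set(1))
  then show ?thesis by (simp add: differentiable_on_def)
qed

lemma smooth_continuous:
  assumes "smooth u"
  shows "continuous_on A u"
  using smooth_differentiable[OF assms]
  by (intro differentiable_imp_continuous_on) (simp add: differentiable_on_def differentiable_at_withinI)

lemma smooth_continuous_grad:
  assumes "smooth u"
  shows "continuous_on A (grad u)"
proof -
  have "continuous_on UNIV (\<lambda>x. frechet_derivative u (at x) b)" if "b \<in> Basis" for b
  proof -
    have "set [b] \<subseteq> Basis" using that by simp
    then have "iter_pd [b] u differentiable_on UNIV"
      using assms unfolding smooth_def by blast
    then show ?thesis by (simp add: differentiable_imp_continuous_on)
  qed
  then have "continuous_on UNIV (\<lambda>x. \<Sum>b\<in>Basis. frechet_derivative u (at x) b *\<^sub>R b)"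
    by (intro continuous_on_sum continuous_on_scaleR continuous_on_const)
  moreover have "grad u = (\<lambda>x. \<Sum>b\<in>Basis. frechet_derivative u (at x) b *\<^sub>R b)"
    using smooth_differentiable[OF assms] by (auto simp: grad_def fun_eq_iff)
  ultimately show ?thesis by (metis continuous_on_subset subset_UNIV)
qed

lemma grad_eq_0_outside_support:
  assumes "x \<notin> closure {y. f y \<noteq> 0}"
  shows "grad f x = 0"
proof -
  have "(f has_derivative (\<lambda>_. 0)) (at x)"
  proof (rule has_derivative_transform_within_open[OF has_derivative_const])
    show "open (- closure {y. f y \<noteq> 0})" by auto
    show "x \<in> - closure {y. f y \<noteq> 0}" using assms by simp
    fix y assume "y \<in> - closure {y. f y \<noteq> 0}"
    then show "0 = f y" using closure_subset[of "{y. f y \<noteq> 0}"] by auto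
  qed
  then show ?thesis by (simp add: grad_eq_sum)
qed

lemma has_derivative_abs_powr:
  fixes u :: "'a::real_normed_vector \<Rightarrow> real"
  assumes Du: "(u has_derivative Du) (at x)" and cont: "continuous_on UNIV u" and nz: "u x \<noteq> 0"
  shows "((\<lambda>y. \<bar>u y\<bar> powr p) has_derivative (\<lambda>h. (p * \<bar>u x\<bar> powr (p - 1) * sgn (u x)) * Du h)) (at x)"
proof -
  define \<sigma> where "\<sigma> = sgn (u x)"
  have pos: "0 < \<sigma> * u x" using nz unfolding \<sigma>_def by (simp add: sgn_real_def)
  have abs_eq: "\<bar>u y\<bar> = \<sigma> * u y" if "0 < \<sigma> * u y" for y
    using that unfolding \<sigma>_def by (auto simp: sgn_real_def abs_if split: if_splits)
  have "((\<lambda>y. (\<sigma> * u y) powr p) has_derivative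
      (\<lambda>h. (\<sigma> * u x) powr p * (0 * ln (\<sigma> * u x) + \<sigma> * Du h * p / (\<sigma> * u x)))) (at x)"
    using Du pos by (auto intro!: derivative_eq_intros)
  moreover have "(\<sigma> * u x) powr p * (0 * ln (\<sigma> * u x) + \<sigma> * Du h * p / (\<sigma> * u x))
      = (p * \<bar>u x\<bar> powr (p - 1) * \<sigma>) * Du h" for h
  proof -
    have "(\<sigma> * u x) powr p = (\<sigma> * u x) powr (p - 1) * (\<sigma> * u x)"
      using powr_add[of "\<sigma> * u x" "p - 1" 1] pos by simp
    then show ?thesis using pos abs_eq[OF pos] by (simp add: field_simps)
  qed
  ultimately have "((\<lambda>y. (\<sigma> * u y) powr p) has_derivative (\<lambda>h. (p * \<bar>u x\<bar> powr (p - 1) * \<sigma>) * Du h)) (at x)"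
    by simp
  then show ?thesis unfolding \<sigma>_def[symmetric]
  proof (rule has_derivative_transform_within_open)
    show "open {y. 0 < \<sigma> * u y}"
      using cont by (intro open_Collect_less continuous_intros) auto
  qed (use pos abs_eq in auto)
qed

lemma grad_abs_powr:
  fixes u :: "'a::euclidean_space \<Rightarrow> real"
  assumes diff: "\<And>y. u differentiable (at y)"
  shows "grad (\<lambda>y. \<bar>u y\<bar> powr p) x = (p * \<bar>u x\<bar> powr (p - 1) * sgn (u x)) *\<^sub>R grad u x"
proof (cases "u x = 0")
  case True
  show ?thesis
  proof (cases "(\<lambda>y. \<bar>u y\<bar> powr p) differentiable (at x)")
    case True
    then obtain W where W: "((\<lambda>y. \<bar>u y\<bar> powr p) has_derivative W) (at x)"
      by (auto simp: differentiable_def)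
    have "W = (\<lambda>h. 0)"
      by (rule has_derivative_local_min[OF W]) (simp add: \<open>u x = 0\<close>)
    then show ?thesis using grad_eq_sum[OF W] \<open>u x = 0\<close> by simp
  qed (simp add: grad_def \<open>u x = 0\<close>)
next
  case False
  obtain Du where Du: "(u has_derivative Du) (at x)" using diff by (auto simp: differentiable_def)
  have "continuous_on UNIV u"
    using diff by (simp add: differentiable_imp_continuous_on differentiable_on_def differentiable_at_withinI)
  from grad_eq_sum[OF has_derivative_abs_powr[OF Du this False]] show ?thesis
    by (simp add: grad_eq_sum[OF Du] scaleR_sum_right)
qed

lemma grad_divide_powr:
  fixes f w :: "'a::euclidean_space \<Rightarrow> real"
  assumes A: "open A" "x \<in> A" and w_pos: "\<And>y. y \<in> A \<Longrightarrow> w y > 0"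
    and dw: "w differentiable (at x)" and df: "f differentiable (at x) \<or> f x = 0"
  shows "grad (\<lambda>y. f y / w y powr a) x
    = (1 / w x powr a) *\<^sub>R grad f x - (a * f x / w x powr (a + 1)) *\<^sub>R grad w x"
proof -
  obtain W where W: "(w has_derivative W) (at x)" using dw by (auto simp: differentiable_def)
  have wx: "w x > 0" using w_pos[OF A(2)] .
  show ?thesis
  proof (cases "f differentiable (at x)")
    case True
    then obtain F where F: "(f has_derivative F) (at x)" by (auto simp: differentiable_def)
    define \<alpha> where "\<alpha> = w x powr (- a)"
    define \<beta> where "\<beta> = - a * f x * w x powr (- a) / w x"
    have "((\<lambda>y. f y * w y powr (- a)) has_derivative (\<lambda>h. \<alpha> * F h + \<beta> * W h)) (at x)"
      using F W wx unfolding \<alpha>_def \<beta>_def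
      by (auto intro!: derivative_eq_intros simp: algebra_simps)
    then have "((\<lambda>y. f y / w y powr a) has_derivative (\<lambda>h. \<alpha> * F h + \<beta> * W h)) (at x)"
      by (rule has_derivative_transform_within_open[OF _ A]) (simp add: w_pos powr_minus_divide)
    then have "grad (\<lambda>y. f y / w y powr a) x = \<alpha> *\<^sub>R grad f x + \<beta> *\<^sub>R grad w x"
      by (simp add: grad_eq_sum[OF F] grad_eq_sum[OF W] grad_eq_sum scaleR_sum_right
          scaleR_add_left sum.distrib)
    moreover have "\<alpha> = 1 / w x powr a" unfolding \<alpha>_def by (simp add: powr_minus_divide)
    moreover have "\<beta> = - (a * f x / w x powr (a + 1))"
      unfolding \<beta>_def using wx by (simp add: powr_add powr_minus_divide)
    ultimately show ?thesis by simp
  next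
    case False
    have "\<not> (\<lambda>y. f y / w y powr a) differentiable (at x)"
    proof
      assume "(\<lambda>y. f y / w y powr a) differentiable (at x)"
      then obtain Q where Q: "((\<lambda>y. f y / w y powr a) has_derivative Q) (at x)"
        by (auto simp: differentiable_def)
      obtain P where "((\<lambda>y. w y powr a) has_derivative P) (at x)"
        using has_derivative_powr[OF W has_derivative_const wx] by blast
      from has_derivative_mult[OF Q this]
      have "(f has_derivative (\<lambda>h. f x / w x powr a * P h + Q h * w x powr a)) (at x)"
        by (rule has_derivative_transform_within_open[OF _ A]) (use w_pos in force)
      then have "f differentiable (at x)" by (auto simp: differentiable_def)
      then show False using False by blast
    qed
    then show ?thesis using False df by (simp add: grad_def)
  qed
qed

section \<open>The pointwise inequality\<close>

lemma young_powr:
  fixes X Y p :: real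
  assumes X: "X \<ge> 0" and Y: "Y \<ge> 0" and p: "p \<ge> 1"
  shows "p * X * Y powr (p - 1) \<le> X powr p + (p - 1) * Y powr p"
proof (cases "p = 1")
  case True
  then show ?thesis using X by (simp add: powr_one)
next
  case False
  then have p1: "p > 1" using p by simp
  define q where "q = p / (p - 1)"
  have q1: "q > 1" unfolding q_def using p1 by (simp add: field_simps)
  have pq: "1 / p + 1 / q = 1" unfolding q_def using p1 by (simp add: field_simps)
  have "X * Y powr (p - 1) \<le> X powr p / p + (Y powr (p - 1)) powr q / q"
    by (rule Youngs_inequality[OF p1 q1 pq X]) simp
  also have "(Y powr (p - 1)) powr q / q = Y powr p * ((p - 1) / p)"
    unfolding powr_powr q_def using p1 by simp
  finally have "X * Y powr (p - 1) \<le> X powr p / p + Y powr p * ((p - 1) / p)"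
    by (simp add: divide_inverse)
  then have "p * (X * Y powr (p - 1)) \<le> p * (X powr p / p + Y powr p * ((p - 1) / p))"
    using p1 by simp
  also have "\<dots> = X powr p + (p - 1) * Y powr p" using p1 by (simp add: field_simps)
  finally show ?thesis by (simp add: mult.assoc)
qed

text \<open>With \<open>a = \<bar>grad u\<bar>\<close>, \<open>w = \<bar>u\<bar>\<close>, \<open>\<delta> = d\<close> and \<open>A = grad d \<bullet> grad \<bar>u\<bar>^p\<close> this compares
  the integrands of the theorem.\<close>

lemma hardy_pointwise:
  fixes a w \<delta> s p A :: real
  assumes a: "a \<ge> 0" and w: "w \<ge> 0" and \<delta>: "\<delta> > 0" and s: "s > 1" and p: "p \<ge> 1"
    and A: "A \<le> p * w powr (p - 1) * a"
  shows "a powr p / \<delta> powr (s - p) \<ge>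
     ((s - 1) / p) powr p * (w powr p / \<delta> powr s)
     + ((s - 1) / p) powr (p - 1) * (A / \<delta> powr (s - 1) - (s - 1) * w powr p / \<delta> powr s)"
proof -
  define c where "c = (s - 1) / p"
  have c: "c > 0" unfolding c_def using s p by simp
  have P: "\<delta> powr s > 0" using \<delta> by simp
  have e1: "\<delta> powr s = \<delta> powr (s - p) * \<delta> powr p" by (simp flip: powr_add)
  have e2: "\<delta> powr s = \<delta> powr (s - 1) * \<delta>" using powr_add[of \<delta> "s - 1" 1] \<delta> by (simp add: powr_one)
  have e3: "c powr p = c powr (p - 1) * c" using powr_add[of c "p - 1" 1] c by (simp add: powr_one)
  have cs: "c powr (p - 1) * (s - 1) = p * c powr p"
    using e3 p unfolding c_def by (simp add: field_simps)
  have pos1: "\<delta> powr (s - p) > 0" "\<delta> powr (s - 1) > 0" using \<delta> by auto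
  have Y: "p * (a * \<delta>) * (c * w) powr (p - 1) \<le> (a * \<delta>) powr p + (p - 1) * (c * w) powr p"
    using young_powr[of "a * \<delta>" "c * w" p] a w \<delta> c p by simp
  have Ad: "c powr (p - 1) * (A * \<delta>) \<le> p * (a * \<delta>) * (c * w) powr (p - 1)"
  proof -
    have "c powr (p - 1) * (A * \<delta>) \<le> c powr (p - 1) * ((p * w powr (p - 1) * a) * \<delta>)"
      using A \<delta> by (intro mult_left_mono mult_right_mono) auto
    also have "\<dots> = p * (a * \<delta>) * (c * w) powr (p - 1)" by (simp add: powr_mult)
    finally show ?thesis .
  qed
  have "(c powr p * (w powr p / \<delta> powr s)
     + c powr (p - 1) * (A / \<delta> powr (s - 1) - (s - 1) * w powr p / \<delta> powr s)) * \<delta> powr s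
     = c powr p * w powr p + c powr (p - 1) * (A * \<delta>) - (c powr (p - 1) * (s - 1)) * w powr p"
    using P pos1 e2 by (simp add: field_simps)
  also have "\<dots> = c powr (p - 1) * (A * \<delta>) - (p - 1) * (c powr p * w powr p)"
    unfolding cs by (simp add: algebra_simps)
  also have "\<dots> \<le> (a * \<delta>) powr p"
    using Y Ad by (simp add: powr_mult)
  also have "\<dots> = (a powr p / \<delta> powr (s - p)) * \<delta> powr s"
    using e1 pos1 by (simp add: powr_mult)
  finally have "c powr p * (w powr p / \<delta> powr s)
     + c powr (p - 1) * (A / \<delta> powr (s - 1) - (s - 1) * w powr p / \<delta> powr s)
     \<le> a powr p / \<delta> powr (s - p)"
    by (rule mult_right_le_imp_le) (rule P)
  then show ?thesis unfolding c_def .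
qed

section \<open>Integration\<close>

lemma integrable_bounded_compact_support:
  fixes f :: "'a::euclidean_space \<Rightarrow> real"
  assumes K: "compact K" and f: "f \<in> borel_measurable borel"
    and zero: "\<And>x. x \<notin> K \<Longrightarrow> f x = 0" and bound: "\<And>x. x \<in> K \<Longrightarrow> \<bar>f x\<bar> \<le> M"
  shows "integrable lborel f"
proof (rule Bochner_Integration.integrable_bound)
  show "integrable lborel (\<lambda>x. \<bar>M\<bar> * indicator K x :: real)"
    using K by (intro integrable_mult_right integrable_real_indicator emeasure_compact_finite)
      (auto intro: borel_compact)
  show "f \<in> borel_measurable lborel" using f by simp
  show "AE x in lborel. norm (f x) \<le> norm (\<bar>M\<bar> * indicator K x :: real)"
    using zero bound by (intro AE_I2) (force simp: indicator_def)
qed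

lemma continuous_on_compact_bound:
  fixes f :: "'a::topological_space \<Rightarrow> real"
  assumes "compact K" "continuous_on K f"
  obtains M where "\<And>x. x \<in> K \<Longrightarrow> \<bar>f x\<bar> \<le> M"
  using compact_imp_bounded[OF compact_continuous_image[OF assms(2,1)]]
  by (auto simp: bounded_real)

locale hardy_data =
  fixes \<Omega> :: "'a::euclidean_space set" and u :: "'a \<Rightarrow> real" and s p :: real
  assumes \<Omega>: "open \<Omega>" "\<Omega> \<noteq> UNIV" and u: "u \<in> Cc_inf \<Omega>" and s: "s > 1" and p: "p \<ge> 1"
begin

abbreviation d :: "'a \<Rightarrow> real" where "d \<equiv> dist_compl \<Omega>"

abbreviation K :: "'a set" where "K \<equiv> closure {x. u x \<noteq> 0}"

lemma d_eq_infdist: "d = (\<lambda>x. infdist x (- \<Omega>))"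
  by (simp add: fun_eq_iff dist_compl_def)

lemma compl_closed_nonempty: "closed (- \<Omega>)" "- \<Omega> \<noteq> {}"
  using \<Omega> by auto

lemma d_pos: "x \<in> \<Omega> \<Longrightarrow> d x > 0"
  unfolding d_eq_infdist using compl_closed_nonempty by (intro infdist_pos_not_in_closed) auto

lemma continuous_d: "continuous_on A d"
  unfolding d_eq_infdist by (intro continuous_intros)

lemma norm_indicator_grad_d: "norm (indicator \<Omega> x *\<^sub>R grad d x) \<le> 1"
  unfolding d_eq_infdist by (simp add: indicator_def norm_grad_le_lipschitz[OF lipschitz_infdist])

lemma u_smooth: "smooth u" and K_compact: "compact K" and K_sub: "K \<subseteq> \<Omega>"
  using u unfolding Cc_inf_def by auto

lemma u_zero_outside: "x \<notin> K \<Longrightarrow> u x = 0"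
  using closure_subset[of "{x. u x \<noteq> 0}"] by auto

lemma grad_u_zero_outside: "x \<notin> K \<Longrightarrow> grad u x = 0"
  by (rule grad_eq_0_outside_support)

lemma norm_grad_abs_powr:
  "norm (grad (\<lambda>y. \<bar>u y\<bar> powr p) x) = p * \<bar>u x\<bar> powr (p - 1) * norm (grad u x)"
  using p by (simp add: grad_abs_powr[OF smooth_differentiable[OF u_smooth]] abs_mult abs_sgn_eq)

lemma grad_pairing_eq:
  assumes x: "x \<in> \<Omega>"
  shows "grad d x \<bullet> grad (\<lambda>x. \<bar>u x\<bar> powr p / d x powr (s - 1)) x
    = 1 / d x powr (s - 1) * (grad d x \<bullet> grad (\<lambda>y. \<bar>u y\<bar> powr p) x)
      - (s - 1) * \<bar>u x\<bar> powr p / d x powr s * (grad d x \<bullet> grad d x)"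
proof (cases "d differentiable (at x)")
  case True
  have "(\<lambda>y. \<bar>u y\<bar> powr p) differentiable (at x) \<or> \<bar>u x\<bar> powr p = 0"
  proof (cases "u x = 0")
    case False
    obtain Du where "(u has_derivative Du) (at x)"
      using smooth_differentiable[OF u_smooth] by (auto simp: differentiable_def)
    from has_derivative_abs_powr[OF this smooth_continuous[OF u_smooth] False]
    show ?thesis by (auto simp: differentiable_def)
  qed simp
  from grad_divide_powr[OF \<Omega>(1) x d_pos True this, of "s - 1"]
  show ?thesis by (simp add: inner_diff_right)
qed (simp add: grad_def)

lemma pointwise_ineq:
  assumes x: "x \<in> \<Omega>" and diff: "d differentiable (at x)"
  shows "((s - 1) / p) powr p * (\<bar>u x\<bar> powr p / d x powr s)
      + ((s - 1) / p) powr (p - 1) * (grad d x \<bullet> grad (\<lambda>x. \<bar>u x\<bar> powr p / d x powr (s - 1)) x)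
    \<le> norm (grad u x) powr p / d x powr (s - p)"
proof -
  have unit: "norm (grad d x) = 1"
    using norm_grad_infdist[OF compl_closed_nonempty] x diff unfolding d_eq_infdist by simp
  define A where "A = grad d x \<bullet> grad (\<lambda>y. \<bar>u y\<bar> powr p) x"
  have "A \<le> norm (grad d x) * norm (grad (\<lambda>y. \<bar>u y\<bar> powr p) x)"
    unfolding A_def by (rule norm_cauchy_schwarz)
  then have A: "A \<le> p * \<bar>u x\<bar> powr (p - 1) * norm (grad u x)"
    using unit norm_grad_abs_powr by simp
  have "grad d x \<bullet> grad d x = 1" using unit by (simp add: power2_norm_eq_inner[symmetric])
  then have "grad d x \<bullet> grad (\<lambda>x. \<bar>u x\<bar> powr p / d x powr (s - 1)) x
      = A / d x powr (s - 1) - (s - 1) * \<bar>u x\<bar> powr p / d x powr s"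
    using grad_pairing_eq[OF x] unfolding A_def by simp
  then show ?thesis
    using hardy_pointwise[OF norm_ge_zero abs_ge_zero d_pos[OF x] s p, of A] A
    by (simp add: mult.commute mult.left_commute)
qed

lemma pointwise_ineq_ae:
  "AE x in lborel. ((s - 1) / p) powr p * (indicator \<Omega> x *\<^sub>R (\<bar>u x\<bar> powr p / d x powr s))
      + ((s - 1) / p) powr (p - 1)
        * (indicator \<Omega> x *\<^sub>R (grad d x \<bullet> grad (\<lambda>x. \<bar>u x\<bar> powr p / d x powr (s - 1)) x))
    \<le> indicator \<Omega> x *\<^sub>R (norm (grad u x) powr p / d x powr (s - p))"
  using AE_not_in[OF infdist_nondifferentiable_null[OF compl_closed_nonempty]]
proof eventually_elim
  case (elim x)
  then show ?case
    using pointwise_ineq[of x] unfolding d_eq_infdist by (cases "x \<in> \<Omega>") auto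
qed

lemma measurable_data [measurable]:
  "u \<in> borel_measurable borel" "grad u \<in> borel_measurable borel"
  "d \<in> borel_measurable borel" "\<Omega> \<in> sets borel"
  using smooth_continuous[OF u_smooth] smooth_continuous_grad[OF u_smooth] continuous_d \<Omega>(1)
  by (simp_all add: borel_measurable_continuous_onI)

lemma continuous_on_support_d_powr: "continuous_on K (\<lambda>x. d x powr a)"
proof (rule continuous_on_powr[OF continuous_d continuous_on_const])
  show "\<forall>x\<in>K. d x \<noteq> 0" using d_pos K_sub by force
qed

lemma continuous_on_support_divide_d_powr:
  "continuous_on K f \<Longrightarrow> continuous_on K (\<lambda>x. f x / d x powr a)"
  using d_pos K_sub by (intro continuous_on_divide continuous_on_support_d_powr) force+

lemma integrable_grad_term:
  "integrable lborel (\<lambda>x. indicator \<Omega> x *\<^sub>R (norm (grad u x) powr p / d x powr (s - p)))"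
proof -
  have "continuous_on K (\<lambda>x. norm (grad u x) powr p / d x powr (s - p))"
    using p by (intro continuous_on_support_divide_d_powr continuous_on_powr' continuous_on_norm
        continuous_on_const smooth_continuous_grad[OF u_smooth]) auto
  then obtain M where M: "\<And>x. x \<in> K \<Longrightarrow> \<bar>norm (grad u x) powr p / d x powr (s - p)\<bar> \<le> M"
    by (rule continuous_on_compact_bound[OF K_compact]) blast
  show ?thesis
  proof (rule integrable_bounded_compact_support[OF K_compact, where M = M])
    show "\<bar>indicator \<Omega> x *\<^sub>R (norm (grad u x) powr p / d x powr (s - p))\<bar> \<le> M" if "x \<in> K" for x
      using M[OF that] K_sub that by (auto simp: indicator_def)
    show "indicator \<Omega> x *\<^sub>R (norm (grad u x) powr p / d x powr (s - p)) = 0" if "x \<notin> K" for x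
      using grad_u_zero_outside[OF that] by simp
  qed measurable
qed

lemma u_term_bound:
  obtains M where "\<And>x. x \<in> K \<Longrightarrow> \<bar>\<bar>u x\<bar> powr p / d x powr s\<bar> \<le> M"
proof -
  have "continuous_on K (\<lambda>x. \<bar>u x\<bar> powr p / d x powr s)"
    using p by (intro continuous_on_support_divide_d_powr continuous_on_powr' continuous_on_rabs
        smooth_continuous[OF u_smooth] continuous_on_const) auto
  then show ?thesis using that continuous_on_compact_bound[OF K_compact] by blast
qed

lemma integrable_u_term:
  "integrable lborel (\<lambda>x. indicator \<Omega> x *\<^sub>R (\<bar>u x\<bar> powr p / d x powr s))"
proof -
  obtain M where M: "\<And>x. x \<in> K \<Longrightarrow> \<bar>\<bar>u x\<bar> powr p / d x powr s\<bar> \<le> M"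
    by (rule u_term_bound) blast
  show ?thesis
  proof (rule integrable_bounded_compact_support[OF K_compact, where M = M])
    show "\<bar>indicator \<Omega> x *\<^sub>R (\<bar>u x\<bar> powr p / d x powr s)\<bar> \<le> M" if "x \<in> K" for x
      using M[OF that] K_sub that by (auto simp: indicator_def)
    show "indicator \<Omega> x *\<^sub>R (\<bar>u x\<bar> powr p / d x powr s) = 0" if "x \<notin> K" for x
      using u_zero_outside[OF that] by simp
  qed measurable
qed

lemma pairing_term_eq:
  "indicator \<Omega> x *\<^sub>R (grad d x \<bullet> grad (\<lambda>x. \<bar>u x\<bar> powr p / d x powr (s - 1)) x)
    = 1 / d x powr (s - 1) * ((indicator \<Omega> x *\<^sub>R grad d x) \<bullet> grad (\<lambda>y. \<bar>u y\<bar> powr p) x)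
      - (s - 1) * \<bar>u x\<bar> powr p / d x powr s
        * ((indicator \<Omega> x *\<^sub>R grad d x) \<bullet> (indicator \<Omega> x *\<^sub>R grad d x))"
  using grad_pairing_eq by (cases "x \<in> \<Omega>") auto

lemma measurable_pairing_term:
  "(\<lambda>x. indicator \<Omega> x *\<^sub>R (grad d x \<bullet> grad (\<lambda>x. \<bar>u x\<bar> powr p / d x powr (s - 1)) x))
    \<in> borel_measurable borel"
proof -
  have [measurable]: "(\<lambda>x. indicator \<Omega> x *\<^sub>R grad d x) \<in> borel_measurable borel"
    using borel_measurable_grad_infdist[OF compl_closed_nonempty] unfolding d_eq_infdist by simp
  have [measurable]: "(\<lambda>x. grad (\<lambda>y. \<bar>u y\<bar> powr p) x) \<in> borel_measurable borel"
    unfolding grad_abs_powr[OF smooth_differentiable[OF u_smooth]] by measurable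
  show ?thesis unfolding pairing_term_eq by measurable
qed

lemma pairing_term_bound:
  obtains M where "\<And>x. x \<in> K \<Longrightarrow>
    \<bar>indicator \<Omega> x *\<^sub>R (grad d x \<bullet> grad (\<lambda>x. \<bar>u x\<bar> powr p / d x powr (s - 1)) x)\<bar> \<le> M"
proof -
  let ?E = "\<lambda>x. indicator \<Omega> x *\<^sub>R grad d x"
  let ?F = "\<lambda>x. grad (\<lambda>y. \<bar>u y\<bar> powr p) x"
  obtain U where U: "\<And>x. x \<in> K \<Longrightarrow> \<bar>u x\<bar> \<le> U"
    using continuous_on_compact_bound[OF K_compact smooth_continuous[OF u_smooth]] by blast
  obtain G where G: "\<And>x. x \<in> K \<Longrightarrow> \<bar>norm (grad u x)\<bar> \<le> G"
    using continuous_on_compact_bound[OF K_compact continuous_on_norm[OF smooth_continuous_grad[OF u_smooth]]]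
    by blast
  have "continuous_on K (\<lambda>x. 1 / d x powr (s - 1))"
    by (intro continuous_on_support_divide_d_powr continuous_on_const)
  then obtain B where B: "\<And>x. x \<in> K \<Longrightarrow> \<bar>1 / d x powr (s - 1)\<bar> \<le> B"
    by (rule continuous_on_compact_bound[OF K_compact]) blast
  obtain C where C: "\<And>x. x \<in> K \<Longrightarrow> \<bar>\<bar>u x\<bar> powr p / d x powr s\<bar> \<le> C"
    by (rule u_term_bound) blast
  have "\<bar>1 / d x powr (s - 1) * (?E x \<bullet> ?F x) - (s - 1) * \<bar>u x\<bar> powr p / d x powr s * (?E x \<bullet> ?E x)\<bar>
      \<le> B * (p * U powr (p - 1) * G) + (s - 1) * C" if x: "x \<in> K" for x
  proof -
    have "\<bar>?E x \<bullet> ?F x\<bar> \<le> norm (?E x) * norm (?F x)" by (rule Cauchy_Schwarz_ineq2)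
    also have "\<dots> \<le> p * \<bar>u x\<bar> powr (p - 1) * norm (grad u x)"
      using norm_indicator_grad_d[of x] p by (simp add: norm_grad_abs_powr mult_left_le_one_le)
    also have "\<dots> \<le> p * U powr (p - 1) * G"
      using U[OF x] G[OF x] p by (intro mult_mono powr_mono2 mult_left_mono) auto
    finally have "\<bar>1 / d x powr (s - 1) * (?E x \<bullet> ?F x)\<bar> \<le> B * (p * U powr (p - 1) * G)"
      unfolding abs_mult using B[OF x] order_trans[OF abs_ge_zero B[OF x]] by (intro mult_mono) auto
    moreover have "\<bar>?E x \<bullet> ?E x\<bar> \<le> 1"
      using norm_indicator_grad_d[of x] by (simp add: power2_norm_eq_inner[symmetric] power_le_one)
    then have "(s - 1) * \<bar>\<bar>u x\<bar> powr p / d x powr s\<bar> * \<bar>?E x \<bullet> ?E x\<bar> \<le> (s - 1) * C * 1"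
      using C[OF x] s order_trans[OF abs_ge_zero C[OF x]] by (intro mult_mono mult_left_mono) auto
    then have "\<bar>(s - 1) * \<bar>u x\<bar> powr p / d x powr s * (?E x \<bullet> ?E x)\<bar> \<le> (s - 1) * C"
      using s by (simp add: abs_mult)
    ultimately show ?thesis by (rule order_trans[OF abs_triangle_ineq4 add_mono])
  qed
  then show ?thesis using that unfolding pairing_term_eq by blast
qed

lemma integrable_pairing_term:
  "integrable lborel (\<lambda>x. indicator \<Omega> x *\<^sub>R (grad d x \<bullet> grad (\<lambda>x. \<bar>u x\<bar> powr p / d x powr (s - 1)) x))"
proof -
  obtain M where M: "\<And>x. x \<in> K \<Longrightarrow>
      \<bar>indicator \<Omega> x *\<^sub>R (grad d x \<bullet> grad (\<lambda>x. \<bar>u x\<bar> powr p / d x powr (s - 1)) x)\<bar> \<le> M"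
    by (rule pairing_term_bound) blast
  show ?thesis
  proof (rule integrable_bounded_compact_support[OF K_compact measurable_pairing_term _ M])
    show "indicator \<Omega> x *\<^sub>R (grad d x \<bullet> grad (\<lambda>x. \<bar>u x\<bar> powr p / d x powr (s - 1)) x) = 0"
      if "x \<notin> K" for x
      unfolding pairing_term_eq norm_grad_abs_powr[of x]
      using u_zero_outside[OF that] grad_u_zero_outside[OF that]
        grad_abs_powr[OF smooth_differentiable[OF u_smooth]]
      by simp
  qed
qed

end

theorem lemma6p1:
  fixes \<Omega> :: "'a::euclidean_space set" and u :: "'a \<Rightarrow> real" and s p :: real
  assumes "open \<Omega>" and "\<Omega> \<noteq> UNIV"
    and "u \<in> Cc_inf \<Omega>" and "s > 1" and "p \<ge> 1"
  shows "(\<integral>x\<in>\<Omega>. norm (grad u x) powr p / dist_compl \<Omega> x powr (s - p) \<partial>lborel)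
     \<ge> ((s - 1) / p) powr p * (\<integral>x\<in>\<Omega>. \<bar>u x\<bar> powr p / dist_compl \<Omega> x powr s \<partial>lborel)
       + ((s - 1) / p) powr (p - 1) *
         neg_lap_pair \<Omega> (dist_compl \<Omega>) (\<lambda>x. \<bar>u x\<bar> powr p / dist_compl \<Omega> x powr (s - 1))"
proof -
  interpret hardy_data \<Omega> u s p using assms by unfold_locales
  let ?c = "(s - 1) / p"
  let ?f = "\<lambda>x. indicator \<Omega> x *\<^sub>R (norm (grad u x) powr p / d x powr (s - p))"
  let ?g = "\<lambda>x. indicator \<Omega> x *\<^sub>R (\<bar>u x\<bar> powr p / d x powr s)"
  let ?h = "\<lambda>x. indicator \<Omega> x *\<^sub>R (grad d x \<bullet> grad (\<lambda>x. \<bar>u x\<bar> powr p / d x powr (s - 1)) x)"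
  have "integrable lborel (\<lambda>x. ?c powr p * ?g x + ?c powr (p - 1) * ?h x)"
    using integrable_u_term integrable_pairing_term
    by (intro Bochner_Integration.integrable_add integrable_mult_right)
  then have "integral\<^sup>L lborel (\<lambda>x. ?c powr p * ?g x + ?c powr (p - 1) * ?h x) \<le> integral\<^sup>L lborel ?f"
    by (rule integral_mono_AE[OF _ integrable_grad_term pointwise_ineq_ae])
  moreover have "integral\<^sup>L lborel (\<lambda>x. ?c powr p * ?g x + ?c powr (p - 1) * ?h x)
      = ?c powr p * integral\<^sup>L lborel ?g + ?c powr (p - 1) * integral\<^sup>L lborel ?h"
    by (simp only: Bochner_Integration.integral_add[OF integrable_mult_right[OF integrable_u_term]
        integrable_mult_right[OF integrable_pairing_term]] integral_mult_right_zero)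
  ultimately show ?thesis
    unfolding set_lebesgue_integral_def neg_lap_pair_def by simp
qed

end
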